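(* Let $A\in\mathbb{R}^{n\times n}$ have all eigenvalues in the open unit disk and let $B\in\mathbb{R}^{n\times m}$ be known. Let $N\geq n$ and for $i=1,\dots,N$ let $x_{i,1},x_{i,2}\in\mathbb{R}^{n}$, $u_{i,1}\in\mathbb{R}^{m}$ satisfy $x_{i,2}=Ax_{i,1}+Bu_{i,1}$. Put $X_{N,1}:=(x_{1,1},\dots,x_{N,1})^{\top}$, $X_{N,2}:=(x_{1,2},\dots,x_{N,2})^{\top}$ (in $\mathbb{R}^{N\times n}$), $U_{N,1}:=(u_{1,1},\dots,u_{N,1})^{\top}\in\mathbb{R}^{N\times m}$, $Z_{B_{N,1}}:=B^{\top}X_{N,1}^{\top}$, $U_{B_{N,1}}:=U_{N,1}B^{\top}$, and let $Z_{N,2}\in\mathbb{R}^{N\times n}$ be a solution of $X_{N,2}X_{N,1}^{\top}=X_{N,1}Z_{N,2}^{\top}+U_{N,1}Z_{B_{N,1}}$. Let $\hat{A}\in\mathbb{R}^{r\times r}$, $\hat{B}\in\mathbb{R}^{r\times m}$, $\hat{C}\in\mathbb{R}^{n\times r}$, and assume: (a1) $(X_{N,1}^{\dagger}Z_{N,2},X_{N,1}^{\dagger}X_{N,1})$ is a regular matrix pencil; (a2) the spectra of $(X_{N,1}^{\dagger}Z_{N,2},X_{N,1}^{\dagger}X_{N,1})$ and $(I_r,\hat{A})$ are disjoint; (a3) $(X_{N,1}^{\dagger}(X_{N,2}-U_{B_{N,1}}),X_{N,1}^{\dagger}X_{N,1})$ is a regular matrix pencil; (a4) the spectra of $(X_{N,1}^{\dagger}(X_{N,2}-U_{B_{N,1}}),X_{N,1}^{\dagger}X_{N,1})$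 and $(I_r,\hat{A})$ are disjoint; (A2) every eigenvalue $\lambda$ of $\hat{A}$ satisfies $0<|\lambda|<1$; (b2) $\operatorname{rank}X_{N,1}=n$. Let $P,Q\in\mathbb{R}^{r\times r}$ be the solutions of $\hat{A}P\hat{A}^{\top}+\hat{B}\hat{B}^{\top}=P$ and $\hat{A}^{\top}Q\hat{A}+\hat{C}^{\top}\hat{C}=Q$. Let $R,S\in\mathbb{R}^{n\times r}$ satisfy $$X_{N,1}^{\dagger}Z_{N,2}R\hat{A}^{\top}+X_{N,1}^{\dagger}Z_{B_{N,1}}^{\top}\hat{B}^{\top}=X_{N,1}^{\dagger}X_{N,1}R,\qquad X_{N,1}^{\dagger}(X_{N,2}-U_{B_{N,1}})S\hat{A}-X_{N,1}^{\dagger}X_{N,1}\hat{C}=X_{N,1}^{\dagger}X_{N,1}S,$$ and set $S_B:=B^{\top}S$. Define $$\tilde{\nabla}_{\hat{A}}f:=2\big(Q\hat{A}P+(S^{\top}R-S_{B}^{\top}\hat{B}^{\top})(\hat{A}^{\dagger})^{\top}\big),\quad \tilde{\nabla}_{\hat{B}}f:=2(S_{B}^{\top}+Q\hat{B}),\quad \tilde{\nabla}_{\hat{C}}f:=2(\hat{C}P-R).$$ Let $R_*,S_*\in\mathbb{R}^{n\times r}$ be the solutions of $AR_*\hat{A}^{\top}+B\hat{B}^{\top}=R_*$ and $A^{\top}S_*\hat{A}-\hat{C}=S_*$. Then $$\tilde{\nabla}_{\hat{A}}f=\nabla_{\hat{A}}f=2(Q\hat{A}P+S_*^{\top}AR_*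 ),\quad \tilde{\nabla}_{\hat{B}}f=\nabla_{\hat{B}}f=2(S_*^{\top}B+Q\hat{B}),\quad \tilde{\nabla}_{\hat{C}}f=\nabla_{\hat{C}}f=2(\hat{C}P-R_* ).$$
   Context: $M^{\dagger}$ denotes the Moore–Penrose pseudoinverse. A pair $(M,K)$ of square matrices of equal size is a regular matrix pencil if $\det(M-\lambda K)$ is not identically zero in $\lambda$; its spectrum is the set of $\lambda\in\mathbb{C}$ with $\det(M-\lambda K)=0$, together with $\infty$ if $K$ is singular. The spectrum of $(I_r,\hat A)$ is the set of $\lambda\in\mathbb{C}$ with $\det(I_r-\lambda\hat A)=0$ (plus $\infty$ if $\hat A$ is singular). Background: for the system $x_{k+1}=Ax_k+Bu_k$, $y_k=x_k$ with transfer function $H(z)=(zI_n-A)^{-1}B$ and a reduced model with $H_r(z)=\hat{C}(zI_r-\hat{A})^{-1}\hat{B}$, $\hat A$ stable, $\|H-H_r\|_{h^2}^2$ equals a constant plus $f(\hat{A},\hat{B},\hat{C})=\operatorname{tr}(\hat{C}P\hat{C}^{\top})-2\operatorname{tr}(R_*\hat{C}^{\top})$, whose entrywise gradients are known (Van Dooren et al.; Bunse-Gerstner et al.) to be $2(Q\hat{A}P+S_*^{\top}AR_* )$, $2(S_*^{\top}B+Q\hat{B})$, $2(\hat{C}P-R_* )$. In this setting $B$ is known, so $Z_{B_{N,1}}$, $U_{B_{N,1}}$ and $S_B$ are computed directly from $B$. *)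

theory Defs
  imports "HOL-Analysis.Analysis"
begin

definition cmat :: "real^'c^'r \<Rightarrow> complex^'c^'r" where
  "cmat M = (\<chi> i j. complex_of_real (M $ i $ j))"

definition eigenvalues :: "real^'n^'n \<Rightarrow> complex set" where
  "eigenvalues A = {z. det (mat z - cmat A) = 0}"

definition pencil_det :: "real^'n^'n \<Rightarrow> real^'n^'n \<Rightarrow> complex \<Rightarrow> complex" where
  "pencil_det M K z = det (cmat M - (\<chi> i j. z * cmat K $ i $ j))"

definition regular_pencil :: "real^'n^'n \<Rightarrow> real^'n^'n \<Rightarrow> bool" where
  "regular_pencil M K \<longleftrightarrow> (\<exists>z. pencil_det M K z \<noteq> 0)"

text \<open>Spectrum of a pencil in the extended complex plane; None stands for infinity.\<close>
definition pencil_spectrum :: "real^'n^'n \<Rightarrow> real^'n^'n \<Rightarrow> complex option set" where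
  "pencil_spectrum M K =
     Some ` {z. pencil_det M K z = 0} \<union> (if det K = 0 then {None} else {})"

definition is_pinv :: "real^'c^'r \<Rightarrow> real^'r^'c \<Rightarrow> bool" where
  "is_pinv M X \<longleftrightarrow> M ** X ** M = M \<and> X ** M ** X = X \<and>
     transpose (M ** X) = M ** X \<and> transpose (X ** M) = X ** M"

definition pinv :: "real^'c^'r \<Rightarrow> real^'r^'c" where
  "pinv M = (THE X. is_pinv M X)"

end

(*
  Since rank X_{N,1} = n, the pseudoinverse of X_{N,1} is a left inverse of it, and the data
  relations x_{i,2} = A x_{i,1} + B u_{i,1} turn the coefficients of the equations for R and S
  into A, B and A^T: R and S solve the same Stein equations as R_* and S_*.

  A homogeneous Stein equation M D K = D forces D = 0 as soon as z w <> 1 for all eigenvalues z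
  of M and w of K, which is what the spectral disjointness hypotheses (a2), (a4) say: split an
  annihilating polynomial of M into linear factors and strip them off one at a time, since
  (M - z) D solves the same equation and (M - z) D = 0 gives D (I - z K) = 0.  Hence R = R_* and
  S = S_*.  For the gradient in A, S^T R - S_B^T Bhat^T = S^T (R - B Bhat^T) = S^T A R Ahat^T,
  and (A2) makes Ahat invertible, so the pseudoinverse cancels Ahat^T.
*)
theory Submission
  imports Defs "HOL-Computational_Algebra.Fundamental_Theorem_Algebra"
begin

lemma matrix_diff_ldistrib: "(A::'a::comm_ring_1^'n^'m) ** (B - C) = A ** B - A ** C"
  by (simp add: matrix_matrix_mult_def vec_eq_iff sum_subtractf right_diff_distrib)

lemma matrix_diff_rdistrib: "((A::'a::comm_ring_1^'n^'m) - B) ** C = A ** C - B ** C"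
  by (simp add: matrix_matrix_mult_def vec_eq_iff sum_subtractf left_diff_distrib)

lemma matrix_add_rdistrib: "((A::'a::comm_ring_1^'n^'m) + B) ** C = A ** C + B ** C"
  by (simp add: matrix_matrix_mult_def vec_eq_iff sum.distrib distrib_right)

lemma mat_mult_left: "mat c ** (X::'a::comm_ring_1^'n^'m) = (\<chi> i j. c * X $ i $ j)"
  unfolding matrix_matrix_mult_def mat_def
  by (auto simp: vec_eq_iff if_distrib if_distribR sum.delta'[OF finite] cong: if_cong)

lemma mat_mult_right: "(X::'a::comm_ring_1^'n^'m) ** mat c = (\<chi> i j. c * X $ i $ j)"
  unfolding matrix_matrix_mult_def mat_def
  by (auto simp: vec_eq_iff if_distrib if_distribR sum.delta'[OF finite] mult.commute cong: if_cong)

lemma mat_mult_commute: "mat c ** (X::'a::comm_ring_1^'n^'m) = X ** mat c"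
  by (simp only: mat_mult_left mat_mult_right)

lemma mat_add: "mat (a + b) = (mat a + mat b :: 'a::comm_ring_1^'n^'n)"
  by (simp add: mat_def vec_eq_iff)

lemma mat_uminus: "mat (- a) = (- mat a :: 'a::comm_ring_1^'n^'n)"
  by (simp add: mat_def vec_eq_iff)

lemma mat_mult_mat: "mat a ** mat b = (mat (a * b) :: 'a::comm_ring_1^'n^'n)"
  by (simp only: mat_mult_left) (simp add: mat_def vec_eq_iff)

lemma mat_of_real_mult: "mat (complex_of_real c) ** (X::complex^'n^'m) = c *\<^sub>R X"
  by (simp only: mat_mult_left vec_eq_iff vector_scaleR_component vec_lambda_beta)
    (simp add: scaleR_conv_of_real)

lemma transpose_diff: "transpose (A - B) = transpose A - transpose B"
  by (simp add: transpose_def vec_eq_iff)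

lemma det_uminus: "det (- (X::'a::comm_ring_1^'n^'n)) = (-1) ^ CARD('n) * det X"
proof -
  have "(\<Prod>i\<in>UNIV. (- X) $ i $ p i) = (-1) ^ CARD('n) * (\<Prod>i\<in>UNIV. X $ i $ p i)" for p
    by (simp add: prod.distrib[symmetric] prod_constant[symmetric] del: prod_constant)
  then show ?thesis by (simp add: det_def sum_distrib_left mult_ac)
qed

lemma cmat_mult: "cmat (X ** Y) = cmat X ** cmat Y"
  by (simp add: cmat_def matrix_matrix_mult_def vec_eq_iff)

lemma cmat_uminus: "cmat (- X) = - cmat X"
  by (simp add: cmat_def vec_eq_iff)

lemma cmat_mat: "cmat (mat c) = mat (complex_of_real c)"
  by (simp add: cmat_def mat_def vec_eq_iff)

lemma cmat_eq_0_iff: "cmat X = 0 \<longleftrightarrow> X = 0"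
  by (simp add: cmat_def vec_eq_iff)

lemma cmat_transpose: "cmat (transpose X) = transpose (cmat X)"
  by (simp add: cmat_def transpose_def vec_eq_iff)

lemma det_cmat: "det (cmat X) = complex_of_real (det X)"
  by (simp add: det_def cmat_def)

lemma invertible_iff_0_notin_eigenvalues: "invertible M \<longleftrightarrow> 0 \<notin> eigenvalues M"
  by (simp add: eigenvalues_def invertible_det_nz det_uminus det_cmat flip: cmat_uminus)

lemma pencil_det_eq: "pencil_det M K z = det (cmat M - mat z ** cmat K)"
  by (simp add: pencil_det_def mat_mult_left)

lemma pencil_spectrum_transpose:
  "pencil_spectrum (transpose M) (transpose K) = pencil_spectrum M K"
proof -
  have "cmat (transpose M) - mat z ** cmat (transpose K) = transpose (cmat M - mat z ** cmat K)" for z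
    by (simp add: cmat_transpose matrix_transpose_mul transpose_diff mat_mult_commute)
  then show ?thesis
    by (simp add: pencil_spectrum_def pencil_det_eq)
qed

section \<open>Polynomials evaluated at a square matrix\<close>

definition poly_mat :: "'a::comm_ring_1 poly \<Rightarrow> 'a^'n^'n \<Rightarrow> 'a^'n^'n" where
  "poly_mat p X = fold_coeffs (\<lambda>a Y. mat a + X ** Y) p 0"

lemma poly_mat_0 [simp]: "poly_mat 0 X = 0"
  by (simp add: poly_mat_def)

lemma poly_mat_pCons: "poly_mat (pCons a p) X = mat a + X ** poly_mat p X"
proof (cases "p = 0")
  case True
  then show ?thesis
    by (cases "a = 0") (simp_all add: poly_mat_def)
next
  case False
  then show ?thesis by (simp add: poly_mat_def)
qed

lemma poly_mat_1 [simp]: "poly_mat 1 X = mat 1"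
  by (simp add: one_pCons poly_mat_pCons)

lemma poly_mat_linear: "poly_mat [:-r, 1:] X = X - mat r"
  by (simp add: poly_mat_pCons mat_uminus)

lemma poly_mat_add: "poly_mat (p + q) X = poly_mat p X + poly_mat q X"
  by (induction p q rule: poly_induct2)
    (simp_all add: poly_mat_pCons mat_add matrix_add_ldistrib algebra_simps)

lemma poly_mat_sum: "finite S \<Longrightarrow> poly_mat (\<Sum>i\<in>S. f i) X = (\<Sum>i\<in>S. poly_mat (f i) X)"
  by (induction S rule: finite_induct) (simp_all add: poly_mat_add)

lemma poly_mat_smult: "poly_mat (smult c p) X = mat c ** poly_mat p X"
proof (induction p)
  case (pCons a p)
  have "X ** (mat c ** poly_mat p X) = mat c ** (X ** poly_mat p X)"
    by (metis mat_mult_commute matrix_mul_assoc)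
  then show ?case
    using pCons by (simp add: poly_mat_pCons matrix_add_ldistrib mat_mult_mat)
qed simp

lemma poly_mat_mult: "poly_mat (p * q) X = poly_mat p X ** poly_mat q X"
proof (induction p)
  case (pCons a p)
  have "poly_mat (pCons a p * q) X = poly_mat (smult a q + pCons 0 (p * q)) X"
    by simp
  also have "\<dots> = mat a ** poly_mat q X + X ** (poly_mat p X ** poly_mat q X)"
    using pCons by (simp only: poly_mat_add poly_mat_smult poly_mat_pCons mat_0 add_0)
  also have "\<dots> = poly_mat (pCons a p) X ** poly_mat q X"
    by (simp only: poly_mat_pCons matrix_add_rdistrib matrix_mul_assoc)
  finally show ?case .
qed simp

lemma poly_mat_annihilator_exists: "\<exists>p. p \<noteq> 0 \<and> poly_mat p (M::complex^'n^'n) = 0"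
proof -
  let ?pow = "\<lambda>k. poly_mat (monom 1 k) M" and ?D = "DIM(complex^'n^'n)"
  show ?thesis
  proof (cases "inj_on ?pow {..?D}")
    case False
    then obtain i j where ij: "i \<noteq> j" "?pow i = ?pow j"
      unfolding inj_on_def by blast
    define p where "p = monom 1 i + smult (-1) (monom (1::complex) j)"
    have "coeff p i = 1"
      using ij by (simp add: p_def)
    then have "p \<noteq> 0"
      by auto
    have "poly_mat p M = ?pow i + mat (-1) ** ?pow j"
      by (simp only: p_def poly_mat_add poly_mat_smult)
    also have "\<dots> = 0"
      using ij(2) by (simp add: mat_mult_left vec_eq_iff)
    finally show ?thesis
      using \<open>p \<noteq> 0\<close> by blast
  next
    case True
    have "card (?pow ` {..?D}) = Suc ?D"
      using True by (simp add: card_image)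
    then have "dependent (?pow ` {..?D})"
      by (intro dependent_biggerset) simp
    then obtain T u v0 where T: "finite T" "T \<subseteq> ?pow ` {..?D}" "(\<Sum>v\<in>T. u v *\<^sub>R v) = 0"
      and v0: "v0 \<in> T" "u v0 \<noteq> 0"
      unfolding real_vector.dependent_explicit by blast
    define K where "K = {k\<in>{..?D}. ?pow k \<in> T}"
    have finK: "finite K" and KT: "?pow ` K = T"
      using T(2) by (auto simp: K_def)
    have injK: "inj_on ?pow K"
      using True by (rule inj_on_subset) (auto simp: K_def)
    define p where "p = (\<Sum>k\<in>K. smult (complex_of_real (u (?pow k))) (monom 1 k))"
    obtain k0 where k0: "k0 \<in> K" "?pow k0 = v0"
      using v0 KT by blast
    have "coeff p k0 = complex_of_real (u v0)"
      using k0 finK by (simp add: p_def coeff_sum smult_monom del: coeff_smult)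
    then have "p \<noteq> 0"
      using v0 by auto
    have "poly_mat p M = (\<Sum>k\<in>K. u (?pow k) *\<^sub>R ?pow k)"
      by (simp add: p_def poly_mat_sum[OF finK] poly_mat_smult mat_of_real_mult)
    also have "\<dots> = 0"
      using sum.reindex[OF injK, of "\<lambda>v. u v *\<^sub>R v"] KT T(3) by simp
    finally show ?thesis
      using \<open>p \<noteq> 0\<close> by blast
  qed
qed

section \<open>Uniqueness for the Stein equation\<close>

lemma stein_homogeneous_factor:
  fixes M :: "complex^'n^'n" and K :: "complex^'r^'r" and F :: "complex^'r^'n"
  assumes stein: "M ** F ** K = F" and kernel: "(M - mat z) ** F = 0"
    and nonres: "det (M - mat z) = 0 \<Longrightarrow> det (mat 1 - mat z ** K) \<noteq> 0"
  shows "F = 0"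
proof (cases "det (M - mat z) = 0")
  case False
  then obtain L where L: "L ** (M - mat z) = mat 1"
    by (auto simp: invertible_det_nz [symmetric] invertible_left_inverse)
  have "F = L ** ((M - mat z) ** F)"
    by (simp add: matrix_mul_assoc L)
  then show ?thesis
    by (simp add: kernel)
next
  case True
  then obtain L where L: "(mat 1 - mat z ** K) ** L = mat 1"
    using nonres by (auto simp: invertible_det_nz [symmetric] invertible_right_inverse)
  have "M ** F = mat z ** F"
    using kernel by (simp add: matrix_diff_rdistrib)
  then have "F ** (mat z ** K) = F"
    using stein by (metis matrix_mul_assoc mat_mult_commute)
  then have "F ** (mat 1 - mat z ** K) = 0"
    by (simp add: matrix_diff_ldistrib)
  then have "F ** ((mat 1 - mat z ** K) ** L) = 0"
    by (simp add: matrix_mul_assoc)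
  then show ?thesis
    by (simp add: L)
qed

lemma stein_homogeneous_eq_0:
  fixes M :: "complex^'n^'n" and K :: "complex^'r^'r" and F :: "complex^'r^'n"
  assumes stein: "M ** F ** K = F"
    and nonres: "\<And>z. det (M - mat z) = 0 \<Longrightarrow> det (mat 1 - mat z ** K) \<noteq> 0"
  shows "F = 0"
proof -
  obtain p where p: "p \<noteq> 0" "poly_mat p M = 0"
    using poly_mat_annihilator_exists by blast
  obtain root where root: "smult (lead_coeff p) (\<Prod>i<degree p. [:-root i, 1:]) = p"
    by (rule complex_poly_decompose')
  let ?q = "\<Prod>i<degree p. [:-root i, 1:]"
  have "mat (lead_coeff p) ** poly_mat ?q M = 0"
    using p(2) root poly_mat_smult by metis
  then have "mat (1 / lead_coeff p) ** (mat (lead_coeff p) ** poly_mat ?q M) = 0"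
    by simp
  then have annih: "poly_mat ?q M = 0"
    using p(1) by (simp add: matrix_mul_assoc mat_mult_mat)
  have peel: "M ** G ** K = G \<Longrightarrow> poly_mat (\<Prod>i<k. [:-root i, 1:]) M ** G = 0 \<Longrightarrow> G = 0"
    for k and G :: "complex^'r^'n"
  proof (induction k arbitrary: G)
    case (Suc k)
    let ?G' = "(M - mat (root k)) ** G"
    have "M ** (M - mat (root k)) = (M - mat (root k)) ** M"
      by (simp add: matrix_diff_ldistrib matrix_diff_rdistrib mat_mult_commute)
    then have "M ** ?G' ** K = (M - mat (root k)) ** (M ** G ** K)"
      by (simp add: matrix_mul_assoc)
    moreover have "poly_mat (\<Prod>i<k. [:-root i, 1:]) M ** ?G' = 0"
      using Suc.prems(2)
      by (simp only: prod.lessThan_Suc poly_mat_mult poly_mat_linear matrix_mul_assoc)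
    ultimately have "?G' = 0"
      using Suc by simp
    then show ?case
      using stein_homogeneous_factor[OF Suc.prems(1)] nonres by blast
  qed simp
  from peel[of F "degree p", OF stein] annih show ?thesis
    by simp
qed

lemma stein_solution_unique:
  fixes M :: "real^'n^'n" and K :: "real^'r^'r" and C X Y :: "real^'r^'n"
  assumes disjoint: "pencil_spectrum M (mat 1) \<inter> pencil_spectrum (mat 1) K = {}"
    and X: "M ** X ** K + C = X" and Y: "M ** Y ** K + C = Y"
  shows "X = Y"
proof -
  have "M ** (X - Y) ** K = X - Y"
    using X Y by (metis add_diff_cancel_right matrix_diff_ldistrib matrix_diff_rdistrib)
  then have "cmat M ** cmat (X - Y) ** cmat K = cmat (X - Y)"
    by (simp flip: cmat_mult)
  moreover have "det (mat 1 - mat z ** cmat K) \<noteq> 0" if "det (cmat M - mat z) = 0" for z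
  proof -
    have "Some z \<in> pencil_spectrum M (mat 1)"
      using that by (simp add: pencil_spectrum_def pencil_det_eq cmat_mat)
    then have "Some z \<notin> pencil_spectrum (mat 1) K"
      using disjoint by blast
    then show ?thesis
      by (auto simp: pencil_spectrum_def pencil_det_eq cmat_mat)
  qed
  ultimately have "cmat (X - Y) = 0"
    by (rule stein_homogeneous_eq_0)
  then show ?thesis
    by (simp add: cmat_eq_0_iff)
qed

section \<open>The Moore--Penrose pseudoinverse\<close>

lemma is_pinv_unique:
  assumes X: "is_pinv M X" and Y: "is_pinv M Y"
  shows "X = Y"
proof -
  have X: "M ** X ** M = M" "X ** M ** X = X" "transpose (M ** X) = M ** X" "transpose (X ** M) = X ** M"
    using X by (auto simp: is_pinv_def)
  have Y: "M ** Y ** M = M" "Y ** M ** Y = Y" "transpose (M ** Y) = M ** Y" "transpose (Y ** M) = Y ** M"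
    using Y by (auto simp: is_pinv_def)
  have XM: "X ** M = Y ** M"
  proof -
    have "X ** M = transpose (M ** Y ** M) ** transpose X"
      using X(4) Y(1) by (metis matrix_transpose_mul)
    also have "\<dots> = transpose (Y ** M) ** transpose (X ** M)"
      by (simp add: matrix_transpose_mul matrix_mul_assoc)
    also have "\<dots> = Y ** (M ** X ** M)"
      using X(4) Y(4) by (simp add: matrix_mul_assoc)
    finally show ?thesis
      using X(1) by simp
  qed
  have MX: "M ** X = M ** Y"
  proof -
    have "M ** X = transpose X ** transpose (M ** Y ** M)"
      using X(3) Y(1) by (metis matrix_transpose_mul)
    also have "\<dots> = transpose (M ** X) ** transpose (M ** Y)"
      by (simp add: matrix_transpose_mul matrix_mul_assoc)
    also have "\<dots> = (M ** X ** M) ** Y"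
      using X(3) Y(3) by (simp add: matrix_mul_assoc)
    finally show ?thesis
      using X(1) by simp
  qed
  have "X = X ** (M ** Y)"
    by (metis X(2) MX matrix_mul_assoc)
  also have "\<dots> = Y"
    using XM Y(2) by (simp add: matrix_mul_assoc)
  finally show ?thesis .
qed

lemma pinv_eqI: "is_pinv M X \<Longrightarrow> pinv M = X"
  unfolding pinv_def using is_pinv_unique by blast

lemma pinv_mult_self_invertible:
  fixes M :: "real^'n^'n"
  assumes "invertible M"
  shows "pinv M ** M = mat 1"
proof -
  obtain L where L: "L ** M = mat 1" "M ** L = mat 1"
    using assms by (auto simp: invertible_def)
  then have "is_pinv M L"
    by (simp add: is_pinv_def matrix_mul_assoc [symmetric])
  with L show ?thesis
    by (simp add: pinv_eqI)
qed

lemma invertible_gram: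
  fixes X :: "real^'n^'m"
  assumes "inj ((*v) X)"
  shows "invertible (transpose X ** X)"
proof -
  have "inj ((*v) (transpose X ** X))"
  proof (rule injI)
    fix x y
    assume "(transpose X ** X) *v x = (transpose X ** X) *v y"
    then have "(x - y) \<bullet> ((transpose X ** X) *v (x - y)) = 0"
      by (simp add: matrix_vector_mult_diff_distrib)
    then have "(X *v (x - y)) \<bullet> (X *v (x - y)) = 0"
      by (simp add: matrix_vector_mul_assoc [symmetric] dot_lmul_matrix [symmetric] inner_commute)
    then have "X *v x = X *v y"
      by (simp add: matrix_vector_mult_diff_distrib)
    then show "x = y"
      using assms by (simp add: inj_eq)
  qed
  then show ?thesis
    by (simp add: invertible_left_inverse matrix_left_invertible_injective)
qed

lemma pinv_mult_self_full_column_rank: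
  fixes X :: "real^'n^'m"
  assumes "rank X = CARD('n)"
  shows "pinv X ** X = mat 1"
proof -
  let ?H = "transpose X ** X"
  obtain L where L: "L ** ?H = mat 1" "?H ** L = mat 1"
    using assms invertible_gram by (auto simp: full_rank_injective invertible_def)
  have "transpose L ** ?H = mat 1"
    using L(2) by (metis matrix_transpose_mul transpose_mat transpose_transpose)
  then have L_sym: "transpose L = L"
    by (metis L(2) matrix_mul_assoc matrix_mul_lid matrix_mul_rid)
  define G where "G = L ** transpose X"
  have GX: "G ** X = mat 1"
    using L(1) by (simp add: G_def matrix_mul_assoc)
  have "is_pinv X G"
    unfolding is_pinv_def
  proof (intro conjI)
    show "X ** G ** X = X" and "G ** X ** G = G" and "transpose (G ** X) = G ** X"
      using GX by (simp_all add: matrix_mul_assoc [symmetric])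
    show "transpose (X ** G) = X ** G"
      using L_sym by (simp add: G_def matrix_transpose_mul matrix_mul_assoc)
  qed
  with GX show ?thesis
    by (simp add: pinv_eqI)
qed

section \<open>The gradient formulas\<close>

lemma data_matrices_mult_left_inverse:
  fixes A :: "real^'n^'n" and B :: "real^'m^'n" and X1 X2 Z2 :: "real^'n^'N"
    and U1 :: "real^'m^'N" and G :: "real^'N^'n"
  assumes G: "G ** X1 = mat 1"
    and data: "\<forall>i. X2 $ i = A *v (X1 $ i) + B *v (U1 $ i)"
    and Z2_eq: "X2 ** transpose X1 = X1 ** transpose Z2 + U1 ** (transpose B ** transpose X1)"
  shows "G ** Z2 = A" and "G ** (X2 - U1 ** transpose B) = transpose A"
proof -
  have X2_eq: "X2 = X1 ** transpose A + U1 ** transpose B"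
    using data
    by (simp add: vec_eq_iff matrix_matrix_mult_def matrix_vector_mult_def transpose_def mult.commute)
  have "X1 ** (transpose A ** transpose X1) = X1 ** transpose Z2"
    using Z2_eq by (simp add: X2_eq matrix_add_rdistrib matrix_mul_assoc)
  then have "G ** (X1 ** transpose (X1 ** A)) = G ** (X1 ** transpose Z2)"
    by (simp add: matrix_transpose_mul)
  then have "Z2 = X1 ** A"
    by (simp add: matrix_mul_assoc G)
  then show "G ** Z2 = A"
    by (simp add: matrix_mul_assoc G)
  show "G ** (X2 - U1 ** transpose B) = transpose A"
    by (simp add: X2_eq matrix_mul_assoc G)
qed

lemma stein_residual_mult_left_inverse:
  fixes A :: "real^'n^'n" and B :: "real^'m^'n" and Ahat G :: "real^'r^'r"
    and Bhat :: "real^'m^'r" and R S :: "real^'r^'n"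
  assumes R: "A ** R ** transpose Ahat + B ** transpose Bhat = R" and G: "G ** Ahat = mat 1"
  shows "(transpose S ** R - transpose (transpose B ** S) ** transpose Bhat) ** transpose G
    = transpose S ** A ** R"
proof -
  have "transpose S ** R - transpose (transpose B ** S) ** transpose Bhat
      = transpose S ** (R - B ** transpose Bhat)"
    by (simp add: matrix_transpose_mul matrix_diff_ldistrib matrix_mul_assoc)
  also have "\<dots> = transpose S ** (A ** R ** transpose Ahat)"
    by (metis R add_diff_cancel_right')
  finally show ?thesis
    using G by (simp add: matrix_mul_assoc [symmetric] flip: matrix_transpose_mul)
qed

theorem theorem2:
  fixes A :: "real^'n^'n" and B :: "real^'m^'n"
    and X1 X2 :: "real^'n^'N" and U1 :: "real^'m^'N"
    and Z2 :: "real^'n^'N"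
    and Ahat :: "real^'r^'r" and Bhat :: "real^'m^'r" and Chat :: "real^'r^'n"
    and P Q :: "real^'r^'r"
    and R S Rs Ss :: "real^'r^'n"
  assumes A_stable: "\<forall>z\<in>eigenvalues A. cmod z < 1"
    and N_ge: "CARD('N) \<ge> CARD('n)"
    and data: "\<forall>i. X2 $ i = A *v (X1 $ i) + B *v (U1 $ i)"
    and Z2_eq: "X2 ** transpose X1 = X1 ** transpose Z2 + U1 ** (transpose B ** transpose X1)"
    and a1: "regular_pencil (pinv X1 ** Z2) (pinv X1 ** X1)"
    and a2: "pencil_spectrum (pinv X1 ** Z2) (pinv X1 ** X1) \<inter> pencil_spectrum (mat 1) Ahat = {}"
    and a3: "regular_pencil (pinv X1 ** (X2 - U1 ** transpose B)) (pinv X1 ** X1)"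
    and a4: "pencil_spectrum (pinv X1 ** (X2 - U1 ** transpose B)) (pinv X1 ** X1)
               \<inter> pencil_spectrum (mat 1) Ahat = {}"
    and A2: "\<forall>z\<in>eigenvalues Ahat. 0 < cmod z \<and> cmod z < 1"
    and b2: "rank X1 = CARD('n)"
    and P_eq: "Ahat ** P ** transpose Ahat + Bhat ** transpose Bhat = P"
    and Q_eq: "transpose Ahat ** Q ** Ahat + transpose Chat ** Chat = Q"
    and R_eq: "pinv X1 ** Z2 ** R ** transpose Ahat
               + pinv X1 ** transpose (transpose B ** transpose X1) ** transpose Bhat
               = pinv X1 ** X1 ** R"
    and S_eq: "pinv X1 ** (X2 - U1 ** transpose B) ** S ** Ahat - pinv X1 ** X1 ** Chat
               = pinv X1 ** X1 ** S"
    and Rs_eq: "A ** Rs ** transpose Ahat + B ** transpose Bhat = Rs"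
    and Ss_eq: "transpose A ** Ss ** Ahat - Chat = Ss"
  shows "2 *\<^sub>R (Q ** Ahat ** P + (transpose S ** R - transpose (transpose B ** S) ** transpose Bhat)
                     ** transpose (pinv Ahat))
           = 2 *\<^sub>R (Q ** Ahat ** P + transpose Ss ** A ** Rs)
       \<and> 2 *\<^sub>R (transpose (transpose B ** S) + Q ** Bhat) = 2 *\<^sub>R (transpose Ss ** B + Q ** Bhat)
       \<and> 2 *\<^sub>R (Chat ** P - R) = 2 *\<^sub>R (Chat ** P - Rs)"
proof -
  have left_inv: "pinv X1 ** X1 = mat 1"
    using b2 by (rule pinv_mult_self_full_column_rank)
  note reduced = data_matrices_mult_left_inverse [OF left_inv data Z2_eq]
  have "pencil_spectrum A (mat 1) \<inter> pencil_spectrum (mat 1) (transpose Ahat) = {}"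
    using a2 pencil_spectrum_transpose [of "mat 1" Ahat] by (simp add: reduced left_inv)
  moreover have "A ** R ** transpose Ahat + B ** transpose Bhat = R"
    using R_eq by (simp add: reduced left_inv matrix_transpose_mul matrix_mul_assoc)
  ultimately have R_unique: "R = Rs"
    using Rs_eq by (rule stein_solution_unique)
  have "pencil_spectrum (transpose A) (mat 1) \<inter> pencil_spectrum (mat 1) Ahat = {}"
    using a4 by (simp add: reduced left_inv)
  moreover have "transpose A ** S ** Ahat + - Chat = S"
    using S_eq by (simp add: reduced left_inv)
  moreover have "transpose A ** Ss ** Ahat + - Chat = Ss"
    using Ss_eq by simp
  ultimately have S_unique: "S = Ss"
    by (rule stein_solution_unique)
  have "0 \<notin> eigenvalues Ahat"
    using A2 by fastforce
  then have "pinv Ahat ** Ahat = mat 1"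
    by (simp add: invertible_iff_0_notin_eigenvalues pinv_mult_self_invertible)
  then have "(transpose Ss ** Rs - transpose (transpose B ** Ss) ** transpose Bhat)
      ** transpose (pinv Ahat) = transpose Ss ** A ** Rs"
    by (rule stein_residual_mult_left_inverse [OF Rs_eq])
  with R_unique S_unique show ?thesis
    by (simp only: matrix_transpose_mul transpose_transpose)
qed

end
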